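(* Let $\sigma:\mathbb R^n\to\mathbb R^{n\times m}$ be of class $C^1$, $u:\mathbb R^n\to\mathbb R$ of class $C^2$ and $\bar x\in\mathbb R^n$. Consider $$h(a_1,a_2)=K(\bar x)\begin{pmatrix}a_1\\ a_2\end{pmatrix}\cdot \begin{pmatrix}a_1\\ a_2\end{pmatrix},\qquad a_1,a_2\in\mathbb R^m,\ |a_1|,|a_2|\leq 1.$$ Then the minimum of $h$ is nonpositive. If this minimum is negative, then it is attained at an eigenvector $v=(a_1,a_2)$ of $K(\bar x)$ associated with the minimal eigenvalue $\lambda$ of $K(\bar x)$, with $|a_1|=|a_2|=1$ and $h(v)=2\lambda$.
   Context: With $\sigma_i$ the columns of $\sigma$, $\nabla u\,\sigma(x)=(\nabla u(x)\cdot\sigma_1(x),\dots,\nabla u(x)\cdot\sigma_m(x))$ and $D(\nabla u\,\sigma)$ its $m\times n$ Jacobian, define $S(x)={}^t\sigma(x)\,{}^tD(\nabla u\,\sigma)(x)\in\mathbb R^{m\times m}$, $S^*=\frac12(S+{}^tS)$ and the symmetric matrix $K(x)=\begin{pmatrix}S^*(x)&{}^tS(x)\\ S(x)&S^*(x)\end{pmatrix}\in\mathbb R^{2m\times2m}$. *)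

theory Defs
  imports "HOL-Analysis.Analysis"
begin

definition C1_map :: "('a::real_normed_vector \<Rightarrow> 'b::real_normed_vector) \<Rightarrow> bool" where
  "C1_map f \<longleftrightarrow> (\<exists>D. (\<forall>x. (f has_derivative blinfun_apply (D x)) (at x)) \<and> continuous_on UNIV D)"

definition grad :: "(real^'n \<Rightarrow> real) \<Rightarrow> real^'n \<Rightarrow> real^'n" where
  "grad u x = (\<chi> i. frechet_derivative u (at x) (axis i 1))"

definition C2_fun :: "(real^'n \<Rightarrow> real) \<Rightarrow> bool" where
  "C2_fun u \<longleftrightarrow> (\<forall>x. u differentiable (at x)) \<and> C1_map (grad u)"

text \<open>sigma(x) is an n x m matrix (n rows indexed by 'n, m columns indexed by 'm);
  nabla u sigma (x) = (grad u x . sigma_1 x, ..., grad u x . sigma_m x).\<close>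
definition grad_sigma :: "(real^'n \<Rightarrow> real) \<Rightarrow> (real^'n \<Rightarrow> real^'m^'n) \<Rightarrow> real^'n \<Rightarrow> real^'m" where
  "grad_sigma u \<sigma> x = (\<chi> i. grad u x \<bullet> column i (\<sigma> x))"

definition D_grad_sigma :: "(real^'n \<Rightarrow> real) \<Rightarrow> (real^'n \<Rightarrow> real^'m^'n) \<Rightarrow> real^'n \<Rightarrow> real^'n^'m" where
  "D_grad_sigma u \<sigma> x = matrix (frechet_derivative (grad_sigma u \<sigma>) (at x))"

definition S_mat :: "(real^'n \<Rightarrow> real) \<Rightarrow> (real^'n \<Rightarrow> real^'m^'n) \<Rightarrow> real^'n \<Rightarrow> real^'m^'m" where
  "S_mat u \<sigma> x = transpose (\<sigma> x) ** transpose (D_grad_sigma u \<sigma> x)"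

definition S_sym :: "(real^'n \<Rightarrow> real) \<Rightarrow> (real^'n \<Rightarrow> real^'m^'n) \<Rightarrow> real^'n \<Rightarrow> real^'m^'m" where
  "S_sym u \<sigma> x = (1/2) *\<^sub>R (S_mat u \<sigma> x + transpose (S_mat u \<sigma> x))"

text \<open>The 2m x 2m block matrix K, indices in 'm + 'm (Inl = first block, Inr = second block).\<close>
definition K_mat :: "(real^'n \<Rightarrow> real) \<Rightarrow> (real^'n \<Rightarrow> real^'m^'n) \<Rightarrow> real^'n \<Rightarrow> real^('m + 'm)^('m + 'm)" where
  "K_mat u \<sigma> x = (\<chi> p q. case (p, q) of
      (Inl i, Inl j) \<Rightarrow> S_sym u \<sigma> x $ i $ j
    | (Inl i, Inr j) \<Rightarrow> transpose (S_mat u \<sigma> x) $ i $ j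
    | (Inr i, Inl j) \<Rightarrow> S_mat u \<sigma> x $ i $ j
    | (Inr i, Inr j) \<Rightarrow> S_sym u \<sigma> x $ i $ j)"

definition stack :: "real^'m \<Rightarrow> real^'m \<Rightarrow> real^('m + 'm)" where
  "stack a1 a2 = (\<chi> p. case p of Inl i \<Rightarrow> a1 $ i | Inr i \<Rightarrow> a2 $ i)"

definition h_fun :: "(real^'n \<Rightarrow> real) \<Rightarrow> (real^'n \<Rightarrow> real^'m^'n) \<Rightarrow> real^'n \<Rightarrow> real^'m \<Rightarrow> real^'m \<Rightarrow> real" where
  "h_fun u \<sigma> x a1 a2 = (K_mat u \<sigma> x *v stack a1 a2) \<bullet> stack a1 a2"

definition mat_eigenvalue :: "real^'k^'k \<Rightarrow> real \<Rightarrow> bool" where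
  "mat_eigenvalue A l \<longleftrightarrow> (\<exists>v. v \<noteq> 0 \<and> A *v v = l *\<^sub>R v)"

definition min_eigenvalue :: "real^'k^'k \<Rightarrow> real \<Rightarrow> bool" where
  "min_eigenvalue A l \<longleftrightarrow> mat_eigenvalue A l \<and> (\<forall>\<mu>. mat_eigenvalue A \<mu> \<longrightarrow> l \<le> \<mu>)"

end

theory Submission
  imports Defs
begin

text \<open>K(x) is symmetric, so it has a minimal eigenvalue \<lambda> with a unit eigenvector, and
  \<lambda> |v|^2 \<le> K v \<bullet> v for all v. On the domain |a1|, |a2| \<le> 1 we have |(a1,a2)|^2 \<le> 2, hence
  h \<ge> min 0 (2\<lambda>); the value 0 is attained at the origin. If \<lambda> < 0, testing the eigenvalue
  equation of an eigenvector (a1,a2) against (a1,0), (0,a2), (a2,0) and (0,a1) shows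
  |a1| = |a2|, so a rescaled eigenvector has |a1| = |a2| = 1 and attains 2\<lambda>.\<close>

lemma quadratic_nonneg_imp_linear_coeff_zero:
  fixes b q :: real
  assumes nonneg: "\<And>t. 0 \<le> 2 * t * b + t\<^sup>2 * q"
  shows "b = 0"
proof (rule ccontr)
  assume "b \<noteq> 0"
  have "q \<ge> 0" using nonneg[of 1] nonneg[of "-1"] by simp
  define t where "t = - b / (q + 2)"
  have qt: "(q + 2) * t = - b" using \<open>q \<ge> 0\<close> by (simp add: t_def)
  have "(q + 2)\<^sup>2 * (2 * t * b + t\<^sup>2 * q) = 2 * b * (q + 2) * ((q + 2) * t) + ((q + 2) * t)\<^sup>2 * q"
    by (simp add: power2_eq_square algebra_simps)
  also have "\<dots> = - b\<^sup>2 * (q + 4)" unfolding qt by (simp add: power2_eq_square algebra_simps)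
  also have "\<dots> < 0" using \<open>b \<noteq> 0\<close> \<open>q \<ge> 0\<close> by simp
  finally have "2 * t * b + t\<^sup>2 * q < 0" by (simp add: zero_less_mult_iff mult_less_0_iff)
  with nonneg[of t] show False by simp
qed

lemma rayleigh_minimizer_is_eigenvector:
  fixes K :: "real^'k^'k"
  assumes sym: "\<And>x y. (K *v x) \<bullet> y = (K *v y) \<bullet> x"
    and lower: "\<And>w. lam * (w \<bullet> w) \<le> (K *v w) \<bullet> w"
    and attained: "(K *v v) \<bullet> v = lam * (v \<bullet> v)"
  shows "K *v v = lam *\<^sub>R v"
proof -
  define r where "r = K *v v - lam *\<^sub>R v"
  define Q where "Q w = (K *v w) \<bullet> w - lam * (w \<bullet> w)" for w
  have "Q (v + t *\<^sub>R r) = 2 * t * (r \<bullet> r) + t\<^sup>2 * Q r" for t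
  proof -
    have "(K *v r) \<bullet> v = (K *v v) \<bullet> r" by (rule sym)
    then show ?thesis
      using attained unfolding Q_def r_def
      by (simp add: matrix_vector_right_distrib matrix_vector_mult_scaleR inner_diff_left
          inner_diff_right inner_add_left inner_add_right inner_commute power2_eq_square algebra_simps)
  qed
  moreover have "\<And>w. 0 \<le> Q w" using lower by (simp add: Q_def)
  ultimately have "r \<bullet> r = 0"
    by (intro quadratic_nonneg_imp_linear_coeff_zero[of _ "Q r"]) metis
  then show ?thesis by (simp add: r_def)
qed

lemma symmetric_matrix_min_eigenvector:
  fixes K :: "real^'k^'k"
  assumes sym: "\<And>x y. (K *v x) \<bullet> y = (K *v y) \<bullet> x"
  obtains v lam where "norm v = 1" "K *v v = lam *\<^sub>R v" "\<And>w. lam * (w \<bullet> w) \<le> (K *v w) \<bullet> w"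
proof -
  define f where "f w = (K *v w) \<bullet> w" for w
  have "continuous_on (sphere 0 1) f"
    unfolding f_def by (intro continuous_intros linear_continuous_on matrix_vector_mul_bounded_linear)
  moreover have "sphere (0::real^'k) 1 \<noteq> {}"
    using vector_choose_size[of 1] by auto
  ultimately obtain v where v: "v \<in> sphere 0 1" and vmin: "\<And>y. y \<in> sphere 0 1 \<Longrightarrow> f v \<le> f y"
    using continuous_attains_inf[OF compact_sphere] by blast
  have vv: "v \<bullet> v = 1" using v by (simp add: dot_square_norm)
  have lower: "f v * (w \<bullet> w) \<le> f w" for w
  proof (cases "w = 0")
    case False
    then have "f v \<le> f ((1 / norm w) *\<^sub>R w)" by (intro vmin) simp
    also have "\<dots> = f w / (norm w)\<^sup>2"
      by (simp add: f_def matrix_vector_mult_scaleR power2_eq_square)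
    finally show ?thesis using False by (simp add: field_simps dot_square_norm)
  qed (simp add: f_def)
  have "K *v v = f v *\<^sub>R v"
    using sym lower vv by (intro rayleigh_minimizer_is_eigenvector) (auto simp: f_def)
  with that v lower show ?thesis unfolding f_def by simp
qed

lemma min_eigenvalueI:
  fixes K :: "real^'k^'k"
  assumes "v \<noteq> 0" "K *v v = lam *\<^sub>R v" and lower: "\<And>w. lam * (w \<bullet> w) \<le> (K *v w) \<bullet> w"
  shows "min_eigenvalue K lam"
  unfolding min_eigenvalue_def mat_eigenvalue_def
proof (intro conjI allI impI)
  show "\<exists>v. v \<noteq> 0 \<and> K *v v = lam *\<^sub>R v" using assms(1,2) by blast
next
  fix \<mu> assume "\<exists>w. w \<noteq> 0 \<and> K *v w = \<mu> *\<^sub>R w"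
  then obtain w where "w \<noteq> 0" "K *v w = \<mu> *\<^sub>R w" by blast
  with lower[of w] show "lam \<le> \<mu>" by simp
qed

lemma sum_UNIV_Plus:
  fixes f :: "('a::finite + 'b::finite) \<Rightarrow> 'c::comm_monoid_add"
  shows "sum f UNIV = (\<Sum>i\<in>UNIV. f (Inl i)) + (\<Sum>j\<in>UNIV. f (Inr j))"
  using sum.Plus[of "UNIV :: 'a set" "UNIV :: 'b set" f] by (simp add: comp_def)

lemma inner_stack: "stack a b \<bullet> stack c d = a \<bullet> c + b \<bullet> d"
  unfolding inner_vec_def by (simp add: sum_UNIV_Plus stack_def)

lemma stack_split: "v = stack (\<chi> i. v $ Inl i) (\<chi> i. v $ Inr i)"
  unfolding vec_eq_iff stack_def by (auto split: sum.split)

lemma stack_zero: "stack 0 0 = 0"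
  unfolding vec_eq_iff stack_def by (auto split: sum.split)

lemma stack_scaleR: "stack (c *\<^sub>R a) (c *\<^sub>R b) = c *\<^sub>R stack a b"
  unfolding vec_eq_iff stack_def by (auto split: sum.split)

lemma K_mat_mult_stack:
  fixes a b :: "real^'m"
  shows "K_mat u \<sigma> x *v stack a b = stack (S_sym u \<sigma> x *v a + transpose (S_mat u \<sigma> x) *v b)
      (S_mat u \<sigma> x *v a + S_sym u \<sigma> x *v b)"
  unfolding vec_eq_iff
proof
  fix p :: "'m + 'm"
  show "(K_mat u \<sigma> x *v stack a b) $ p = stack (S_sym u \<sigma> x *v a + transpose (S_mat u \<sigma> x) *v b)
      (S_mat u \<sigma> x *v a + S_sym u \<sigma> x *v b) $ p"
    by (cases p) (simp_all add: matrix_vector_mult_def sum_UNIV_Plus K_mat_def stack_def)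
qed

lemma inner_transpose_mult: "(transpose (S::real^'m^'m) *v b) \<bullet> c = (S *v c) \<bullet> b"
  unfolding transpose_matrix_vector dot_lmul_matrix by (simp add: inner_commute)

lemma S_sym_mult:
  "S_sym u \<sigma> x *v a = (1/2) *\<^sub>R (S_mat u \<sigma> x *v a + transpose (S_mat u \<sigma> x) *v a)"
  unfolding S_sym_def
  by (simp add: vec_eq_iff matrix_vector_mult_def transpose_def sum_distrib_left algebra_simps
      sum.distrib del: transpose_matrix_vector)

lemma K_mat_bilinear_form:
  fixes u :: "real^'n \<Rightarrow> real" and \<sigma> :: "real^'n \<Rightarrow> real^'m^'n" and x :: "real^'n"
  defines "S \<equiv> S_mat u \<sigma> x"
  shows "(K_mat u \<sigma> x *v stack a b) \<bullet> stack c d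
    = ((S *v a) \<bullet> c + (S *v c) \<bullet> a) / 2 + (S *v c) \<bullet> b + (S *v a) \<bullet> d
      + ((S *v b) \<bullet> d + (S *v d) \<bullet> b) / 2"
  unfolding K_mat_mult_stack inner_stack S_sym_mult S_def
  by (simp add: inner_add_left inner_transpose_mult algebra_simps add_divide_distrib
      del: transpose_matrix_vector)

lemma K_mat_symmetric: "(K_mat u \<sigma> x *v v) \<bullet> w = (K_mat u \<sigma> x *v w) \<bullet> v"
  by (subst (1 2) stack_split[of v], subst (1 2) stack_split[of w])
    (simp add: K_mat_bilinear_form algebra_simps)

lemma K_mat_eigenvector_balanced:
  assumes eig: "K_mat u \<sigma> x *v stack a b = lam *\<^sub>R stack a b" and "lam \<noteq> 0"
  shows "a \<bullet> a = b \<bullet> b"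
proof -
  have test: "(K_mat u \<sigma> x *v stack a b) \<bullet> stack c d = lam * (a \<bullet> c + b \<bullet> d)" for c d
    using eig by (simp add: inner_stack)
  note eqs = test[of a 0] test[of 0 b] test[of b 0] test[of 0 a]
  have "lam * (a \<bullet> a) = lam * (b \<bullet> b)"
    using eqs[unfolded K_mat_bilinear_form, simplified, simplified inner_commute[of b a]]
    by (smt (verit))
  then show ?thesis using \<open>lam \<noteq> 0\<close> by simp
qed

lemma h_fun_lower_bound:
  assumes lower: "\<And>w. lam * (w \<bullet> w) \<le> (K_mat u \<sigma> x *v w) \<bullet> w"
    and "norm a \<le> 1" "norm b \<le> 1"
  shows "min 0 (2 * lam) \<le> h_fun u \<sigma> x a b"
proof -
  have "(norm a)\<^sup>2 \<le> 1" "(norm b)\<^sup>2 \<le> 1"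
    using assms(2,3) by (simp_all add: power_le_one)
  then have "0 \<le> a \<bullet> a + b \<bullet> b" "a \<bullet> a + b \<bullet> b \<le> 2"
    by (simp_all add: dot_square_norm)
  then have "min 0 (2 * lam) \<le> lam * (a \<bullet> a + b \<bullet> b)"
    by (cases "lam \<ge> 0") (simp_all add: mult_le_cancel_left_neg min_def)
  also have "\<dots> \<le> h_fun u \<sigma> x a b"
    using lower[of "stack a b"] by (simp add: h_fun_def inner_stack)
  finally show ?thesis .
qed

lemma h_fun_balanced_eigenvector:
  assumes "norm v = 1" "K_mat u \<sigma> x *v v = lam *\<^sub>R v" "lam \<noteq> 0"
  obtains a1 a2 where "norm a1 = 1" "norm a2 = 1"
    "K_mat u \<sigma> x *v stack a1 a2 = lam *\<^sub>R stack a1 a2" "h_fun u \<sigma> x a1 a2 = 2 * lam"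
proof -
  define b1 where "b1 = (\<chi> i. v $ Inl i)"
  define b2 where "b2 = (\<chi> i. v $ Inr i)"
  have v: "v = stack b1 b2" unfolding b1_def b2_def by (rule stack_split)
  have "b1 \<bullet> b1 = b2 \<bullet> b2"
    using assms(2,3) v by (intro K_mat_eigenvector_balanced) simp_all
  moreover have "b1 \<bullet> b1 + b2 \<bullet> b2 = 1"
    using assms(1) v by (metis inner_stack norm_eq_1)
  ultimately have half: "b1 \<bullet> b1 = 1/2" "b2 \<bullet> b2 = 1/2" by auto
  define a1 where "a1 = sqrt 2 *\<^sub>R b1"
  define a2 where "a2 = sqrt 2 *\<^sub>R b2"
  have unit: "a1 \<bullet> a1 = 1" "a2 \<bullet> a2 = 1"
    unfolding a1_def a2_def using half by (simp_all add: mult.assoc[symmetric])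
  have eig: "K_mat u \<sigma> x *v stack a1 a2 = lam *\<^sub>R stack a1 a2"
    unfolding a1_def a2_def stack_scaleR using assms(2) v by (simp add: matrix_vector_mult_scaleR)
  show ?thesis
  proof (rule that)
    show "norm a1 = 1" "norm a2 = 1" using unit by (simp_all add: norm_eq_sqrt_inner)
    show "h_fun u \<sigma> x a1 a2 = 2 * lam" unfolding h_fun_def eig using unit by (simp add: inner_stack)
  qed (fact eig)
qed

theorem proposition4:
  fixes \<sigma> :: "real^'n \<Rightarrow> real^'m^'n" and u :: "real^'n \<Rightarrow> real" and xbar :: "real^'n"
  assumes "C1_map \<sigma>" and "C2_fun u"
  defines "D \<equiv> {(a1, a2). norm (a1 :: real^'m) \<le> 1 \<and> norm (a2 :: real^'m) \<le> 1}"
  defines "hmin \<equiv> (INF p\<in>D. h_fun u \<sigma> xbar (fst p) (snd p))"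
  shows "(\<exists>p\<in>D. h_fun u \<sigma> xbar (fst p) (snd p) = hmin)
    \<and> hmin \<le> 0
    \<and> (hmin < 0 \<longrightarrow>
         (\<exists>a1 a2 lam. norm a1 = 1 \<and> norm a2 = 1
            \<and> h_fun u \<sigma> xbar a1 a2 = hmin
            \<and> min_eigenvalue (K_mat u \<sigma> xbar) lam
            \<and> K_mat u \<sigma> xbar *v stack a1 a2 = lam *\<^sub>R stack a1 a2
            \<and> h_fun u \<sigma> xbar a1 a2 = 2 * lam))"
proof -
  let ?h = "\<lambda>p. h_fun u \<sigma> xbar (fst p) (snd p)"
  obtain v lam where v: "norm v = 1" "K_mat u \<sigma> xbar *v v = lam *\<^sub>R v"
    and lower: "\<And>w. lam * (w \<bullet> w) \<le> (K_mat u \<sigma> xbar *v w) \<bullet> w"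
    using symmetric_matrix_min_eigenvector[of "K_mat u \<sigma> xbar"] K_mat_symmetric by blast
  have min_eig: "min_eigenvalue (K_mat u \<sigma> xbar) lam"
    using v lower by (intro min_eigenvalueI[of v]) auto
  have balanced: "\<exists>a1 a2. norm a1 = 1 \<and> norm a2 = 1 \<and> h_fun u \<sigma> xbar a1 a2 = 2 * lam
      \<and> K_mat u \<sigma> xbar *v stack a1 a2 = lam *\<^sub>R stack a1 a2" if "lam < 0"
    using h_fun_balanced_eigenvector[OF v] that by (metis less_irrefl)
  have attained: "min 0 (2 * lam) \<in> ?h ` D"
  proof (cases "lam < 0")
    case True
    with balanced obtain a1 a2 where "norm a1 = 1" "norm a2 = 1" "h_fun u \<sigma> xbar a1 a2 = 2 * lam"
      by blast
    with True show ?thesis unfolding D_def by (intro image_eqI[of _ _ "(a1, a2)"]) auto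
  qed (auto simp: D_def h_fun_def stack_zero intro!: image_eqI[of _ _ "(0, 0)"])
  have hmin: "hmin = min 0 (2 * lam)"
    unfolding hmin_def using attained h_fun_lower_bound[OF lower]
    by (intro cInf_eq_minimum) (auto simp: D_def)
  have negative: "lam < 0 \<and> hmin = 2 * lam" if "hmin < 0"
    using that unfolding hmin by (auto simp: min_def split: if_splits)
  show ?thesis
  proof (intro conjI)
    show "\<exists>p\<in>D. ?h p = hmin" "hmin \<le> 0"
      using attained unfolding hmin by force+
  qed (use negative balanced min_eig in force)
qed

end
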